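(* Let $p$ be an odd prime and $\zeta=e^{2\pi\mathbf i/(p-1)}$. Then $$\prod_{1\le i<j\le \frac{p-1}{2}}(\zeta^{2j}-\zeta^{2i})=e^{\frac{(p-3)(3p+1)}{16}\pi\mathbf i}\cdot\Big(\frac{p-1}{2}\Big)^{\frac{p-1}{4}},$$ where $\big(\frac{p-1}{2}\big)^{\frac{p-1}{4}}$ denotes the positive real power.
   Context: $\mathbf i=\sqrt{-1}$. *)

theory Defs
  imports "HOL-Analysis.Analysis"
begin

end

theory Submission
  imports Defs "HOL-Computational_Algebra.Fundamental_Theorem_Algebra"
begin

text \<open>
  Put \<open>n = (p - 1) / 2\<close> and \<open>\<omega> = \<zeta>\<^sup>2 = exp (2\<pi>\<i> / n)\<close>; the product is the Vandermonde
  product of the \<open>n\<close>-th roots of unity \<open>\<omega>, \<dots>, \<omega>\<^sup>n\<close>. Each factor is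
  \<open>\<omega>\<^sup>j - \<omega>\<^sup>i = exp (\<pi>\<i> (i + j) / n) \<cdot> \<i> \<cdot> 2 sin (\<pi> (j - i) / n)\<close> with a nonnegative
  sine, so the argument of the product is an explicit sum of angles. Its squared modulus is the
  discriminant of \<open>x\<^sup>n - 1\<close>: since \<open>\<Prod>\<^sub>j\<^sub>\<noteq>\<^sub>i (\<omega>\<^sup>i - \<omega>\<^sup>j)\<close> is the derivative
  \<open>n x\<^sup>n\<^sup>-\<^sup>1\<close> at \<open>x = \<omega>\<^sup>i\<close>, the product of \<open>|\<omega>\<^sup>i - \<omega>\<^sup>j|\<close> over all \<open>i \<noteq> j\<close> is \<open>n\<^sup>n\<close>.
\<close>

definition increasing_pairs :: "nat \<Rightarrow> (nat \<times> nat) set" where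
  "increasing_pairs n = {(i, j). 1 \<le> i \<and> i < j \<and> j \<le> n}"

lemma finite_increasing_pairs [simp]: "finite (increasing_pairs n)"
  by (rule finite_subset[of _ "{1..n} \<times> {1..n}"]) (auto simp: increasing_pairs_def)

lemma increasing_pairs_eq_Sigma: "increasing_pairs n = prod.swap ` (SIGMA j:{1..n}. {1..<j})"
  by (auto simp: increasing_pairs_def image_iff)

lemma sum_increasing_pairs:
  "(\<Sum>(i, j) \<in> increasing_pairs n. g i j) = (\<Sum>j=1..n. \<Sum>i=1..<j. g i j)"
  by (simp add: increasing_pairs_eq_Sigma sum.reindex sum.Sigma case_prod_unfold)

lemma card_increasing_pairs: "2 * card (increasing_pairs n) = (n - 1) * n"
proof -
  have "card (increasing_pairs n) = (\<Sum>j=1..n. j - 1)"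
    using sum_increasing_pairs[of "\<lambda>_ _. 1::nat" n] by simp
  moreover have "2 * (\<Sum>j=1..n. j - 1) = (n - 1) * n"
    by (induction n) (auto simp: algebra_simps)
  ultimately show ?thesis by simp
qed

lemma sum_index_increasing_pairs:
  "2 * (\<Sum>(i, j) \<in> increasing_pairs n. i + j) = (n - 1) * n * (n + 1)"
proof -
  have "2 * (\<Sum>j=1..n. \<Sum>i=1..<j. i + j) = (n - 1) * n * (n + 1)"
  proof (induction n)
    case (Suc n)
    have "2 * (\<Sum>i=1..<Suc n. i) = n * Suc n"
      by (induction n) auto
    moreover have "(\<Sum>i=1..<Suc n. i + Suc n) = (\<Sum>i=1..<Suc n. i) + n * Suc n"
      by (subst sum.distrib) simp
    ultimately have last: "2 * (\<Sum>i=1..<Suc n. i + Suc n) = 3 * n * Suc n"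
      by simp
    have "2 * (\<Sum>j=1..Suc n. \<Sum>i=1..<j. i + j)
        = 2 * (\<Sum>j=1..n. \<Sum>i=1..<j. i + j) + 2 * (\<Sum>i=1..<Suc n. i + Suc n)"
      by (simp only: sum.cl_ivl_Suc) simp
    also have "\<dots> = (n - 1) * n * (n + 1) + 3 * n * Suc n"
      by (simp only: Suc.IH last)
    also have "\<dots> = (Suc n - 1) * Suc n * (Suc n + 1)"
      by (cases n) (simp_all add: algebra_simps)
    finally show ?case .
  qed simp
  then show ?thesis by (simp add: sum_increasing_pairs)
qed

lemma prod_off_diagonal_symmetric:
  fixes f :: "nat \<Rightarrow> nat \<Rightarrow> 'a::comm_monoid_mult"
  assumes sym: "\<And>i j. f i j = f j i"
  shows "(\<Prod>i\<in>{1..n}. \<Prod>j\<in>{1..n} - {i}. f i j) = (\<Prod>(i, j) \<in> increasing_pairs n. f i j) ^ 2"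
proof -
  let ?P = "increasing_pairs n"
  have "(SIGMA i:{1..n}. {1..n} - {i}) = ?P \<union> prod.swap ` ?P"
    by (auto simp: increasing_pairs_def image_iff)
  moreover have "?P \<inter> prod.swap ` ?P = {}"
    by (auto simp: increasing_pairs_def)
  ultimately have "(\<Prod>i\<in>{1..n}. \<Prod>j\<in>{1..n} - {i}. f i j)
      = (\<Prod>(i, j) \<in> ?P. f i j) * (\<Prod>(i, j) \<in> prod.swap ` ?P. f i j)"
    by (simp add: prod.Sigma prod.union_disjoint)
  also have "(\<Prod>(i, j) \<in> prod.swap ` ?P. f i j) = (\<Prod>(i, j) \<in> ?P. f i j)"
    by (subst prod.reindex) (auto simp: case_prod_unfold sym)
  finally show ?thesis by (simp add: power2_eq_square)
qed

lemma prod_diff_roots_unity: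
  fixes w :: complex
  assumes n: "n \<ge> 1" and w: "w ^ n = 1"
  shows "(\<Prod>z \<in> {z. z ^ n = 1} - {w}. w - z) = of_nat n * w ^ (n - 1)"
proof -
  let ?R = "{z::complex. z ^ n = 1}"
  define P :: "complex poly" where "P = [:-1:] + monom 1 n"
  have poly_P: "poly P x = x ^ n - 1" for x
    by (simp add: P_def poly_monom)
  have pderiv_P: "pderiv P = monom (of_nat n) (n - 1)"
    by (simp add: P_def pderiv_add pderiv_monom pderiv_pCons)
  have fin: "finite ?R"
    using n by (intro finite_roots_unity) auto
  have lc: "lead_coeff P = 1"
    unfolding P_def using n by (subst lead_coeff_add_le) (auto simp: degree_monom_eq)
  have sqf: "rsquarefree P"
    unfolding rsquarefree_roots
  proof (intro allI notI)
    fix a assume "poly P a = 0 \<and> poly (pderiv P) a = 0"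
    then have "a ^ n = 1" and "of_nat n * a ^ (n - 1) = 0"
      by (simp_all add: poly_P pderiv_P poly_monom)
    with n show False
      by (auto simp: power_0_left)
  qed
  have P_eq: "P = (\<Prod>z\<in>?R. [:-z, 1:])"
    using complex_poly_decompose_rsquarefree[OF sqf] lc by (simp add: poly_P)
  have "poly (pderiv P) w = (\<Sum>a\<in>?R. \<Prod>z\<in>?R - {a}. w - z)"
    by (subst P_eq) (simp add: pderiv_prod poly_sum poly_prod pderiv_pCons)
  also have "\<dots> = (\<Prod>z\<in>?R - {w}. w - z) + (\<Sum>a\<in>?R - {w}. \<Prod>z\<in>?R - {a}. w - z)"
    using w by (subst sum.remove[OF fin, of w]) simp_all
  also have "(\<Sum>a\<in>?R - {w}. \<Prod>z\<in>?R - {a}. w - z) = 0"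
    using w by (intro sum.neutral ballI prod_zero) (use fin in auto)
  finally show ?thesis
    by (simp add: pderiv_P poly_monom)
qed

definition unit_root :: "nat \<Rightarrow> nat \<Rightarrow> complex" where
  "unit_root n k = cis (2 * pi * real k / real n)"

lemma bij_betw_unit_root:
  assumes "n \<ge> 1"
  shows "bij_betw (unit_root n) {1..n} {z. z ^ n = 1}"
proof -
  define h where "h k = (if k = n then 0 else k)" for k :: nat
  have "bij_betw h {1..n} {..<n}"
    by (rule bij_betw_byWitness[where f' = "\<lambda>k. if k = 0 then n else k"])
       (use assms in \<open>auto simp: h_def\<close>)
  moreover have "bij_betw (\<lambda>k. cis (2 * pi * real k / real n)) {..<n} {z. z ^ n = 1}"
    using assms by (intro Complex.bij_betw_roots_unity) simp
  ultimately have "bij_betw ((\<lambda>k. cis (2 * pi * real k / real n)) \<circ> h) {1..n} {z. z ^ n = 1}"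
    by (rule bij_betw_trans)
  moreover have "((\<lambda>k. cis (2 * pi * real k / real n)) \<circ> h) k = unit_root n k" if "k \<in> {1..n}" for k
    using assms by (simp add: h_def unit_root_def)
  ultimately show ?thesis
    using bij_betw_cong[of "{1..n}"] by blast
qed

lemma prod_dist_unit_roots:
  assumes n: "n \<ge> 1"
  shows "(\<Prod>i\<in>{1..n}. \<Prod>j\<in>{1..n} - {i}. norm (unit_root n i - unit_root n j)) = real n ^ n"
proof -
  have bij: "bij_betw (unit_root n) {1..n} {z. z ^ n = 1}"
    using n by (rule bij_betw_unit_root)
  then have inj: "inj_on (unit_root n) {1..n}"
    by (rule bij_betw_imp_inj_on)
  have "(\<Prod>j\<in>{1..n} - {i}. norm (unit_root n i - unit_root n j)) = real n" if i: "i \<in> {1..n}" for i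
  proof -
    let ?w = "unit_root n i"
    have im: "unit_root n ` ({1..n} - {i}) = {z. z ^ n = 1} - {?w}"
      using bij i inj_on_image_set_diff[OF inj, of "{1..n}" "{i}"] by (auto simp: bij_betw_def)
    have "(\<Prod>j\<in>{1..n} - {i}. norm (?w - unit_root n j)) = norm (\<Prod>z\<in>{z. z ^ n = 1} - {?w}. ?w - z)"
      by (simp add: prod_norm prod.reindex inj_on_subset[OF inj] flip: im)
    also have "\<dots> = norm (of_nat n * ?w ^ (n - 1))"
      using bij i n by (subst prod_diff_roots_unity) (auto simp: bij_betw_def)
    finally show ?thesis
      by (simp add: norm_mult norm_power unit_root_def)
  qed
  then show ?thesis
    by simp
qed

lemma norm_prod_unit_root_diff:
  assumes "n \<ge> 1"
  shows "norm (\<Prod>(i, j) \<in> increasing_pairs n. unit_root n j - unit_root n i) = real n powr (real n / 2)"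
proof -
  let ?N = "norm (\<Prod>(i, j) \<in> increasing_pairs n. unit_root n j - unit_root n i)"
  have "?N ^ 2 = (\<Prod>i\<in>{1..n}. \<Prod>j\<in>{1..n} - {i}. norm (unit_root n i - unit_root n j))"
    by (subst prod_off_diagonal_symmetric)
       (simp_all add: case_prod_unfold norm_minus_commute flip: prod_norm)
  also have "\<dots> = real n ^ n"
    using assms by (rule prod_dist_unit_roots)
  also have "\<dots> = (real n powr (real n / 2)) ^ 2"
    using assms by (simp add: powr_power powr_realpow)
  finally show ?thesis
    by (rule power2_eq_imp_eq) simp_all
qed

lemma prod_cis: "(\<Prod>x\<in>A. cis (f x)) = cis (\<Sum>x\<in>A. f x)"
  by (induction A rule: infinite_finite_induct) (auto simp: cis_mult)

lemma unit_root_diff: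
  assumes "n > 0"
  shows "unit_root n j - unit_root n i
           = cis (pi * (real i + real j) / real n) * (\<i> * of_real (2 * sin (pi * (real j - real i) / real n)))"
proof -
  let ?s = "pi * (real i + real j) / real n" and ?t = "pi * (real j - real i) / real n"
  have "\<i> * of_real (2 * sin ?t) = cis ?t - cis (- ?t)"
    by (simp add: complex_eq_iff)
  then have "cis ?s * (\<i> * of_real (2 * sin ?t)) = cis (?s + ?t) - cis (?s + - ?t)"
    by (simp only: right_diff_distrib cis_mult)
  also have "\<dots> = unit_root n j - unit_root n i"
    using assms by (simp add: unit_root_def field_simps)
  finally show ?thesis
    by (rule sym)
qed

lemma prod_unit_root_diff_polar:
  assumes n: "n \<ge> 1"
  shows "(\<Prod>(i, j) \<in> increasing_pairs n. unit_root n j - unit_root n i)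
           = cis (pi * (real n - 1) * (3 * real n + 2) / 4)
             * of_real (\<Prod>(i, j) \<in> increasing_pairs n. 2 * sin (pi * (real j - real i) / real n))"
proof -
  let ?P = "increasing_pairs n"
  define S where "S = real (\<Sum>(i, j) \<in> ?P. i + j)"
  define M where "M = real (card ?P)"
  have S: "2 * S = (real n - 1) * real n * (real n + 1)"
    using arg_cong[OF sum_index_increasing_pairs[of n], of real] n
    by (simp add: S_def of_nat_diff algebra_simps)
  have M: "2 * M = (real n - 1) * real n"
    using arg_cong[OF card_increasing_pairs[of n], of real] n by (simp add: M_def of_nat_diff)
  have "(\<Prod>(i, j) \<in> ?P. unit_root n j - unit_root n i)
      = (\<Prod>(i, j) \<in> ?P. cis (pi * (real i + real j) / real n)) * \<i> ^ card ?P
        * of_real (\<Prod>(i, j) \<in> ?P. 2 * sin (pi * (real j - real i) / real n))"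
    using n by (simp add: unit_root_diff prod.distrib case_prod_unfold mult.assoc)
  also have "(\<Prod>(i, j) \<in> ?P. cis (pi * (real i + real j) / real n)) = cis (pi / real n * S)"
    by (simp add: prod_cis case_prod_unfold S_def sum_divide_distrib sum_distrib_left
        distrib_left add_divide_distrib)
  also have "\<i> ^ card ?P = cis (M * (pi / 2))"
    by (simp add: M_def Complex.DeMoivre flip: cis_pi_half)
  also have "cis (pi / real n * S) * cis (M * (pi / 2)) = cis (pi * (real n - 1) * (3 * real n + 2) / 4)"
  proof -
    have S': "S = (real n - 1) * real n * (real n + 1) / 2" and M': "M = (real n - 1) * real n / 2"
      using S M by simp_all
    have "pi / real n * S + M * (pi / 2) = pi * (real n - 1) * (3 * real n + 2) / 4"
      unfolding S' M' using n by (simp add: field_simps)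
    then show ?thesis
      by (simp only: cis_mult)
  qed
  finally show ?thesis .
qed

lemma prod_sin_increasing_pairs_nonneg:
  "0 \<le> (\<Prod>(i, j) \<in> increasing_pairs n. 2 * sin (pi * (real j - real i) / real n))"
proof (rule prod_nonneg, safe)
  fix i j assume "(i, j) \<in> increasing_pairs n"
  then have "0 \<le> (real j - real i) / real n" "(real j - real i) / real n \<le> 1"
    by (auto simp: increasing_pairs_def field_simps)
  then have "0 \<le> sin (pi * ((real j - real i) / real n))"
    by (intro sin_ge_zero mult_nonneg_nonneg mult_left_le) simp_all
  then show "0 \<le> 2 * sin (pi * (real j - real i) / real n)"
    by simp
qed

theorem prod_unit_root_diff:
  assumes "n \<ge> 1"
  shows "(\<Prod>(i, j) \<in> increasing_pairs n. unit_root n j - unit_root n i)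
           = cis (pi * (real n - 1) * (3 * real n + 2) / 4) * of_real (real n powr (real n / 2))"
proof -
  let ?R = "\<Prod>(i, j) \<in> increasing_pairs n. 2 * sin (pi * (real j - real i) / real n)"
  have "real n powr (real n / 2) = norm (\<Prod>(i, j) \<in> increasing_pairs n. unit_root n j - unit_root n i)"
    using assms by (rule norm_prod_unit_root_diff [symmetric])
  also have "\<dots> = norm (cis (pi * (real n - 1) * (3 * real n + 2) / 4) * complex_of_real ?R)"
    by (simp only: prod_unit_root_diff_polar[OF assms])
  also have "\<dots> = ?R"
    using prod_sin_increasing_pairs_nonneg[of n] by (simp only: norm_mult norm_cis norm_of_real)
  finally show ?thesis
    using assms by (simp add: prod_unit_root_diff_polar)
qed

theorem mainTheorem7:
  fixes p :: nat
  assumes "prime p" and "odd p"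
  defines "\<zeta> \<equiv> exp (2 * pi * \<i> / of_nat (p - 1))"
  shows "(\<Prod>(i, j) \<in> {(i, j). 1 \<le> i \<and> i < j \<and> j \<le> (p - 1) div 2}.
            \<zeta> ^ (2 * j) - \<zeta> ^ (2 * i))
         = exp (complex_of_real (real ((p - 3) * (3 * p + 1)) / 16 * pi) * \<i>)
           * complex_of_real ((real (p - 1) / 2) powr (real (p - 1) / 4))"
proof -
  define n where "n = (p - 1) div 2"
  have "p \<noteq> 2" "p \<ge> 2"
    using assms(1,2) prime_ge_2_nat by auto
  then have p: "p = 2 * n + 1" and n: "n \<ge> 1"
    using assms(2) unfolding n_def by presburger+
  have "\<zeta> = cis (pi / real n)"
    using n by (simp add: \<zeta>_def p cis_conv_exp field_simps)
  then have \<zeta>_pow: "\<zeta> ^ (2 * k) = unit_root n k" for k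
    by (simp add: Complex.DeMoivre unit_root_def field_simps)
  have lhs: "(\<Prod>(i, j) \<in> {(i, j). 1 \<le> i \<and> i < j \<and> j \<le> (p - 1) div 2}. \<zeta> ^ (2 * j) - \<zeta> ^ (2 * i))
      = (\<Prod>(i, j) \<in> increasing_pairs n. unit_root n j - unit_root n i)"
    unfolding increasing_pairs_def n_def[symmetric] by (rule prod.cong) (auto simp: \<zeta>_pow)
  have angle: "real ((p - 3) * (3 * p + 1)) / 16 * pi = pi * (real n - 1) * (3 * real n + 2) / 4"
    using n by (simp add: p of_nat_diff field_simps)
  have base: "real (p - 1) / 2 = real n" and exponent: "real (p - 1) / 4 = real n / 2"
    by (simp_all add: p)
  show ?thesis
    unfolding lhs prod_unit_root_diff[OF n] angle base exponent cis_conv_exp by (simp add: mult_ac)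
qed

end
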